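(* Let $d$ be a weak simulation quasimetric on networks of pTCWS. Then the relation $\mathcal R=\{(M,N) : d(M,N)=0\}$ is a weak probabilistic simulation, i.e. whenever $M\,\mathcal R\,N$ and $M\xrightarrow{\alpha}\Delta$, there exist a weak transition $N\overset{\hat\alpha}{\Longrightarrow}\Theta$ and a matching $\omega\in\Omega(\Delta,\Theta)$ such that $\omega(M',N')>0$ implies $M'\,\mathcal R\,N'$.
   Context: The process calculus pTCWS. Processes $P,Q$ and probabilistic choices $C,D$ are $P ::= \mathsf{nil} \mid {!}\langle u\rangle.C \mid \lfloor ?(x).C\rfloor D \mid \tau.C \mid \sigma.C \mid X \mid \mathsf{fix}\,X.P$ and $C ::= \bigoplus_{i\in I} p_i{:}P_i$ ($I$ finite non-empty, $p_i\in(0,1]$, $\sum_i p_i=1$); in $\mathsf{fix}\,X.P$ every occurrence of $X$ is time-guarded (under a $\sigma$-prefix or in a timeout branch $D$). $1{:}P$ is written $P$; $P\oplus_pQ$ is $p{:}P\oplus(1-p){:}Q$; ${!}\langle v\rangle$ is ${!}\langle v\rangle.\mathsf{nil}$. Networks: $M::=\mathbf 0\mid M_1\mid M_2\mid n[P]^\nu\mid\bot$, where $n[P]^\nu$ is a node named $n$ running closed process $P$ with neighbour set $\nu$, and $\bot$ is a stuck network; $\mathrm{nds}(M)$ is the set of node names. Structural congruence $\equiv$: least equivalence preserved by $\mid$, making $\mid$ a commutative monoid with unit $\mathbf 0$, with $n[\mathsf{fix}\,X.P]^\nu\equiv n[P\{\mathsf{fix}\,X.P/X\}]^\nu$. Networks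 are assumed well-formed (no node is its own neighbour, distinct names, symmetric neighbourhood, connected neighbour graph). $\mathrm{rcv}(P)$ holds iff $n[P]^\nu\equiv n[\lfloor ?(x).C\rfloor D]^\nu$ for some $x,C,D$. Semantics: $\mathcal D(\mathcal N)$ is the set of finite-support probability distributions on networks, $|\Delta|$ the total mass of a sub-distribution, $\overline M$ the Dirac distribution; $[\![n[\bigoplus_i p_i{:}P_i]^\nu]\!]=\sum_ip_i\overline{n[P_i]^\nu}$; $(\Delta\mid\Theta)(M_1\mid M_2)=\Delta(M_1)\Theta(M_2)$. Transitions $M\xrightarrow{\lambda}\Delta$, $\lambda\in\{m!v\triangleright\nu, m?v,\tau,\sigma\}$, form the least relation closed under: (Snd) $m[{!}\langle v\rangle.C]^\nu\xrightarrow{m!v\triangleright\nu}[\![m[C]^\nu]\!]$; (Rcv) if $m\in\nu$: $n[\lfloor ?(x).C\rfloor D]^\nu\xrightarrow{m?v}[\![n[C\{v/x\}]^\nu]\!]$; $\mathbf 0\xrightarrow{m?v}\overline{\mathbf 0}$; (RcvEnb) if $\neg(m\in\nu\wedge\mathrm{rcv}(P))$ and $m\ne n$: $n[P]^\nu\xrightarrow{m?v}\overline{n[P]^\nu}$; (RcvPar) $M\xrightarrow{m?v}\Delta$, $N\xrightarrow{m?v}\Theta$ give $M\mid N\xrightarrow{m?v}\Delta\mid\Theta$; (Bcast) $M\xrightarrow{m!v\triangleright\nu}\Delta$, $N\xrightarrow{m?v}\Theta$ give $M\mid N\xrightarrow{m!v\triangleright(\nu\setminus\mathrm{nds}(N))}\Delta\mid\Theta$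 (and symmetrically); (Tau) $m[\tau.C]^\nu\xrightarrow{\tau}[\![m[C]^\nu]\!]$; (TauPar) $M\xrightarrow{\tau}\Delta$ and $N$ not of the form $\bot\mid N'$ give $M\mid N\xrightarrow{\tau}\Delta\mid\overline N$ (and symmetrically); $\mathbf 0\xrightarrow{\sigma}\overline{\mathbf 0}$; $n[\mathsf{nil}]^\nu\xrightarrow{\sigma}\overline{n[\mathsf{nil}]^\nu}$; (Timeout) $n[\lfloor ?(x).C\rfloor D]^\nu\xrightarrow{\sigma}[\![n[D]^\nu]\!]$; (Sleep) $n[\sigma.C]^\nu\xrightarrow{\sigma}[\![n[C]^\nu]\!]$; ($\sigma$-Par) $M\xrightarrow{\sigma}\Delta$, $N\xrightarrow{\sigma}\Theta$ give $M\mid N\xrightarrow{\sigma}\Delta\mid\Theta$; (Rec) $n[P\{\mathsf{fix}\,X.P/X\}]^\nu\xrightarrow{\lambda}\Delta$ gives $n[\mathsf{fix}\,X.P]^\nu\xrightarrow{\lambda}\Delta$; (ShhSnd) $M\xrightarrow{m!v\triangleright\emptyset}\Delta$ gives $M\xrightarrow{\tau}\Delta$; (ObsSnd) $M\xrightarrow{m!v\triangleright\nu}\Delta$ with $\nu\ne\emptyset$ gives $M\xrightarrow{!v\triangleright\nu}\Delta$. $\bot$ has no transitions. $\alpha$ ranges over $!v\triangleright\nu$, $m?v$, $\sigma$, $\tau$. Weak transitions: $M\xrightarrow{\hat\tau}\Delta$ iff $M\xrightarrow{\tau}\Delta$ or $\Delta=\overline M$; for $\alpha\ne\tau$, $\xrightarrow{\hat\alpha}=\xrightarrow{\alpha}$.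 For $\Delta=\sum_{i\in I}p_i\overline{M_i}$, $\Delta\xrightarrow{\hat\alpha}\Theta$ iff for some non-empty $J\subseteq I$, $M_j\xrightarrow{\hat\alpha}\Theta_j$ ($j\in J$), $M_i$ has no $\hat\alpha$-transition ($i\notin J$), and $\Theta=\sum_{j\in J}p_j\Theta_j$. $\overset{\hat\tau}{\Longrightarrow}$ is the reflexive-transitive closure of $\xrightarrow{\hat\tau}$, and $\overset{\hat\alpha}{\Longrightarrow}=\overset{\hat\tau}{\Longrightarrow}\xrightarrow{\hat\alpha}\overset{\hat\tau}{\Longrightarrow}$ for $\alpha\neq\tau$. A pseudoquasimetric is $d:\mathcal N\times\mathcal N\to[0,1]$ with $d(M,M)=0$ and $d(M,N)\le d(M,O)+d(O,N)$. A matching $\omega\in\Omega(\Delta,\Theta)$ is a distribution on $\mathcal N\times\mathcal N$ with left marginal $\Delta$ and right marginal $\Theta$; $\mathcal K(d)(\Delta,\Theta)=\min_{\omega\in\Omega(\Delta,\Theta)}\sum_{M,N}\omega(M,N)d(M,N)$. A weak simulation quasimetric is a pseudoquasimetric $d$ such that for all $M,N$ with $d(M,N)<1$, whenever $M\xrightarrow{\alpha}\Delta$ there is $\Theta$ with $N\overset{\hat\alpha}{\Longrightarrow}\Theta$ and $\mathcal K(d)(\Delta,\Theta+(1-|\Theta|)\overline\bot)\le d(M,N)$. *)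

theory Defs
  imports Complex_Main
begin

section \<open>Syntax of pTCWS\<close>

type_synonym name = nat
type_synonym val = nat
type_synonym var = nat
type_synonym pvar = nat

datatype tm = Val val | Var var

text \<open>Processes. A probabilistic choice C = (+)_i p_i:P_i is represented as the list
  of pairs (p_i, P_i). PRcv x C D is the receiver with timeout, written |_?(x).C_|D.\<close>
datatype proc =
    PNil
  | PSnd tm "(real \<times> proc) list"
  | PRcv var "(real \<times> proc) list" "(real \<times> proc) list"
  | PTau "(real \<times> proc) list"
  | PSleep "(real \<times> proc) list"
  | PVar pvar
  | PFix pvar proc

type_synonym choice = "(real \<times> proc) list"

datatype net = Zero | Par net net | Node name proc "name set" | Bot

primrec nds :: "net \<Rightarrow> name set" where
  "nds Zero = {}"
| "nds (Par M N) = nds M \<union> nds N"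
| "nds (Node n P \<nu>) = {n}"
| "nds Bot = {}"

definition tsubst :: "var \<Rightarrow> val \<Rightarrow> tm \<Rightarrow> tm" where
  "tsubst x v u = (case u of Var y \<Rightarrow> (if y = x then Val v else Var y) | Val w \<Rightarrow> Val w)"

primrec vsubst :: "var \<Rightarrow> val \<Rightarrow> proc \<Rightarrow> proc" where
  "vsubst x v PNil = PNil"
| "vsubst x v (PSnd u C) = PSnd (tsubst x v u) (map (map_prod id (vsubst x v)) C)"
| "vsubst x v (PRcv y C D) =
     PRcv y (if y = x then C else map (map_prod id (vsubst x v)) C) (map (map_prod id (vsubst x v)) D)"
| "vsubst x v (PTau C) = PTau (map (map_prod id (vsubst x v)) C)"
| "vsubst x v (PSleep C) = PSleep (map (map_prod id (vsubst x v)) C)"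
| "vsubst x v (PVar Y) = PVar Y"
| "vsubst x v (PFix Y P) = PFix Y (vsubst x v P)"

definition csubst :: "var \<Rightarrow> val \<Rightarrow> choice \<Rightarrow> choice" where
  "csubst x v C = map (map_prod id (vsubst x v)) C"

primrec psubst :: "pvar \<Rightarrow> proc \<Rightarrow> proc \<Rightarrow> proc" where
  "psubst X Q PNil = PNil"
| "psubst X Q (PSnd u C) = PSnd u (map (map_prod id (psubst X Q)) C)"
| "psubst X Q (PRcv y C D) = PRcv y (map (map_prod id (psubst X Q)) C) (map (map_prod id (psubst X Q)) D)"
| "psubst X Q (PTau C) = PTau (map (map_prod id (psubst X Q)) C)"
| "psubst X Q (PSleep C) = PSleep (map (map_prod id (psubst X Q)) C)"
| "psubst X Q (PVar Y) = (if Y = X then Q else PVar Y)"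
| "psubst X Q (PFix Y P) = (if Y = X then PFix Y P else PFix Y (psubst X Q P))"

primrec fv :: "proc \<Rightarrow> var set" where
  "fv PNil = {}"
| "fv (PSnd u C) = (case u of Var y \<Rightarrow> {y} | Val w \<Rightarrow> {}) \<union> (\<Union>pP\<in>set (map (map_prod id fv) C). snd pP)"
| "fv (PRcv y C D) = ((\<Union>pP\<in>set (map (map_prod id fv) C). snd pP) - {y}) \<union> (\<Union>pP\<in>set (map (map_prod id fv) D). snd pP)"
| "fv (PTau C) = (\<Union>pP\<in>set (map (map_prod id fv) C). snd pP)"
| "fv (PSleep C) = (\<Union>pP\<in>set (map (map_prod id fv) C). snd pP)"
| "fv (PVar Y) = {}"
| "fv (PFix Y P) = fv P"

primrec fpv :: "proc \<Rightarrow> pvar set" where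
  "fpv PNil = {}"
| "fpv (PSnd u C) = (\<Union>pP\<in>set (map (map_prod id fpv) C). snd pP)"
| "fpv (PRcv y C D) = (\<Union>pP\<in>set (map (map_prod id fpv) C). snd pP) \<union> (\<Union>pP\<in>set (map (map_prod id fpv) D). snd pP)"
| "fpv (PTau C) = (\<Union>pP\<in>set (map (map_prod id fpv) C). snd pP)"
| "fpv (PSleep C) = (\<Union>pP\<in>set (map (map_prod id fpv) C). snd pP)"
| "fpv (PVar Y) = {Y}"
| "fpv (PFix Y P) = fpv P - {Y}"

text \<open>tguarded X P: every free occurrence of X in P is time-guarded, i.e. lies under a
  sigma-prefix or inside a timeout branch D.\<close>
primrec tguarded :: "pvar \<Rightarrow> proc \<Rightarrow> bool" where
  "tguarded X PNil = True"
| "tguarded X (PSnd u C) = (\<forall>pP\<in>set (map (map_prod id (tguarded X)) C). snd pP)"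
| "tguarded X (PRcv y C D) = (\<forall>pP\<in>set (map (map_prod id (tguarded X)) C). snd pP)"
| "tguarded X (PTau C) = (\<forall>pP\<in>set (map (map_prod id (tguarded X)) C). snd pP)"
| "tguarded X (PSleep C) = True"
| "tguarded X (PVar Y) = (Y \<noteq> X)"
| "tguarded X (PFix Y P) = (Y = X \<or> tguarded X P)"

definition wf_choice_probs :: "choice \<Rightarrow> bool" where
  "wf_choice_probs C \<longleftrightarrow> C \<noteq> [] \<and> (\<forall>pP\<in>set C. 0 < fst pP \<and> fst pP \<le> 1)
     \<and> (\<Sum>pP\<leftarrow>C. fst pP) = 1"

primrec wf_proc :: "proc \<Rightarrow> bool" where
  "wf_proc PNil = True"
| "wf_proc (PSnd u C) = (wf_choice_probs C \<and> (\<forall>pP\<in>set (map (map_prod id wf_proc) C). snd pP))"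
| "wf_proc (PRcv y C D) = (wf_choice_probs C \<and> wf_choice_probs D
      \<and> (\<forall>pP\<in>set (map (map_prod id wf_proc) C). snd pP) \<and> (\<forall>pP\<in>set (map (map_prod id wf_proc) D). snd pP))"
| "wf_proc (PTau C) = (wf_choice_probs C \<and> (\<forall>pP\<in>set (map (map_prod id wf_proc) C). snd pP))"
| "wf_proc (PSleep C) = (wf_choice_probs C \<and> (\<forall>pP\<in>set (map (map_prod id wf_proc) C). snd pP))"
| "wf_proc (PVar Y) = True"
| "wf_proc (PFix Y P) = (tguarded Y P \<and> wf_proc P)"

primrec nodes :: "net \<Rightarrow> (name \<times> proc \<times> name set) list" where
  "nodes Zero = []"
| "nodes (Par M N) = nodes M @ nodes N"
| "nodes (Node n P \<nu>) = [(n, P, \<nu>)]"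
| "nodes Bot = []"

definition nbr_edges :: "net \<Rightarrow> (name \<times> name) set" where
  "nbr_edges M = {(n, m). \<exists>P \<nu>. (n, P, \<nu>) \<in> set (nodes M) \<and> m \<in> \<nu> \<and> m \<in> nds M}"

definition wf_net :: "net \<Rightarrow> bool" where
  "wf_net M \<longleftrightarrow>
     (\<forall>(n, P, \<nu>)\<in>set (nodes M). wf_proc P \<and> fv P = {} \<and> fpv P = {} \<and> n \<notin> \<nu>)
   \<and> distinct (map fst (nodes M))
   \<and> (\<forall>(n, P, \<nu>)\<in>set (nodes M). \<forall>(m, Q, \<mu>)\<in>set (nodes M). m \<in> \<nu> \<longleftrightarrow> n \<in> \<mu>)
   \<and> (\<forall>n\<in>nds M. \<forall>m\<in>nds M. (n, m) \<in> (nbr_edges M)\<^sup>*)"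

definition Nets :: "net set" where
  "Nets = {M. wf_net M}"

inductive scong :: "net \<Rightarrow> net \<Rightarrow> bool" where
  sc_refl: "scong M M"
| sc_sym: "scong M N \<Longrightarrow> scong N M"
| sc_trans: "scong M N \<Longrightarrow> scong N L \<Longrightarrow> scong M L"
| sc_par: "scong M M' \<Longrightarrow> scong N N' \<Longrightarrow> scong (Par M N) (Par M' N')"
| sc_comm: "scong (Par M N) (Par N M)"
| sc_assoc: "scong (Par (Par M N) L) (Par M (Par N L))"
| sc_unit: "scong (Par M Zero) M"
| sc_fix: "scong (Node n (PFix X P) \<nu>) (Node n (psubst X (PFix X P) P) \<nu>)"

definition rcv :: "name \<Rightarrow> name set \<Rightarrow> proc \<Rightarrow> bool" where
  "rcv n \<nu> P \<longleftrightarrow> (\<exists>x C D. scong (Node n P \<nu>) (Node n (PRcv x C D) \<nu>))"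

type_synonym dist = "net \<Rightarrow> real"

definition dirac :: "net \<Rightarrow> dist" where
  "dirac M = (\<lambda>N. if N = M then 1 else 0)"

definition denot :: "name \<Rightarrow> name set \<Rightarrow> choice \<Rightarrow> dist" where
  "denot n \<nu> C = (\<lambda>N. \<Sum>pP\<leftarrow>C. if N = Node n (snd pP) \<nu> then fst pP else 0)"

definition dpar :: "dist \<Rightarrow> dist \<Rightarrow> dist" where
  "dpar \<Delta> \<Theta> = (\<lambda>N. case N of Par M1 M2 \<Rightarrow> \<Delta> M1 * \<Theta> M2 | _ \<Rightarrow> 0)"

definition supp :: "('a \<Rightarrow> real) \<Rightarrow> 'a set" where
  "supp f = {x. f x \<noteq> 0}"

definition mass :: "dist \<Rightarrow> real" where
  "mass \<Delta> = sum \<Delta> (supp \<Delta>)"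

definition is_dist :: "dist \<Rightarrow> bool" where
  "is_dist \<Delta> \<longleftrightarrow> finite (supp \<Delta>) \<and> (\<forall>M. 0 \<le> \<Delta> M) \<and> mass \<Delta> = 1"

section \<open>Labelled transition semantics\<close>

text \<open>LSnd m v nu is m!v|>nu, LRcv m v is m?v, LObs v nu is !v|>nu.\<close>
datatype label = LSnd name val "name set" | LRcv name val | LTau | LSigma | LObs val "name set"

text \<open>Actions alpha range over !v|>nu, m?v, sigma, tau.\<close>
definition is_action :: "label \<Rightarrow> bool" where
  "is_action l \<longleftrightarrow> (\<forall>m v \<nu>. l \<noteq> LSnd m v \<nu>)"

inductive trans :: "net \<Rightarrow> label \<Rightarrow> dist \<Rightarrow> bool" where
  Snd: "trans (Node m (PSnd (Val v) C) \<nu>) (LSnd m v \<nu>) (denot m \<nu> C)"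
| Rcv: "m \<in> \<nu> \<Longrightarrow> trans (Node n (PRcv x C D) \<nu>) (LRcv m v) (denot n \<nu> (csubst x v C))"
| RcvZero: "trans Zero (LRcv m v) (dirac Zero)"
| RcvEnb: "\<not> (m \<in> \<nu> \<and> rcv n \<nu> P) \<Longrightarrow> m \<noteq> n \<Longrightarrow>
    trans (Node n P \<nu>) (LRcv m v) (dirac (Node n P \<nu>))"
| RcvPar: "trans M (LRcv m v) \<Delta> \<Longrightarrow> trans N (LRcv m v) \<Theta> \<Longrightarrow>
    trans (Par M N) (LRcv m v) (dpar \<Delta> \<Theta>)"
| Bcast: "trans M (LSnd m v \<nu>) \<Delta> \<Longrightarrow> trans N (LRcv m v) \<Theta> \<Longrightarrow>
    trans (Par M N) (LSnd m v (\<nu> - nds N)) (dpar \<Delta> \<Theta>)"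
| BcastSym: "trans M (LSnd m v \<nu>) \<Delta> \<Longrightarrow> trans N (LRcv m v) \<Theta> \<Longrightarrow>
    trans (Par N M) (LSnd m v (\<nu> - nds N)) (dpar \<Theta> \<Delta>)"
| Tau: "trans (Node m (PTau C) \<nu>) LTau (denot m \<nu> C)"
| TauPar: "trans M LTau \<Delta> \<Longrightarrow> \<not> (\<exists>N'. scong N (Par Bot N')) \<Longrightarrow>
    trans (Par M N) LTau (dpar \<Delta> (dirac N))"
| TauParSym: "trans M LTau \<Delta> \<Longrightarrow> \<not> (\<exists>N'. scong N (Par Bot N')) \<Longrightarrow>
    trans (Par N M) LTau (dpar (dirac N) \<Delta>)"
| SigmaZero: "trans Zero LSigma (dirac Zero)"
| SigmaNil: "trans (Node n PNil \<nu>) LSigma (dirac (Node n PNil \<nu>))"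
| Timeout: "trans (Node n (PRcv x C D) \<nu>) LSigma (denot n \<nu> D)"
| Sleep: "trans (Node n (PSleep C) \<nu>) LSigma (denot n \<nu> C)"
| SigmaPar: "trans M LSigma \<Delta> \<Longrightarrow> trans N LSigma \<Theta> \<Longrightarrow>
    trans (Par M N) LSigma (dpar \<Delta> \<Theta>)"
| Rec: "trans (Node n (psubst X (PFix X P) P) \<nu>) l \<Delta> \<Longrightarrow> trans (Node n (PFix X P) \<nu>) l \<Delta>"
| ShhSnd: "trans M (LSnd m v {}) \<Delta> \<Longrightarrow> trans M LTau \<Delta>"
| ObsSnd: "trans M (LSnd m v \<nu>) \<Delta> \<Longrightarrow> \<nu> \<noteq> {} \<Longrightarrow> trans M (LObs v \<nu>) \<Delta>"

section \<open>Weak transitions\<close>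

definition hat_step :: "label \<Rightarrow> net \<Rightarrow> dist \<Rightarrow> bool" where
  "hat_step a M \<Delta> \<longleftrightarrow> (if a = LTau then trans M LTau \<Delta> \<or> \<Delta> = dirac M else trans M a \<Delta>)"

definition dhat_step :: "label \<Rightarrow> dist \<Rightarrow> dist \<Rightarrow> bool" where
  "dhat_step a \<Delta> \<Theta> \<longleftrightarrow>
     (\<exists>(I :: nat set) p Ms J \<Theta>s. finite I \<and> (\<forall>i\<in>I. 0 < p i)
        \<and> \<Delta> = (\<lambda>N. \<Sum>i\<in>I. p i * dirac (Ms i) N)
        \<and> J \<subseteq> I \<and> J \<noteq> {}
        \<and> (\<forall>j\<in>J. hat_step a (Ms j) (\<Theta>s j))
        \<and> (\<forall>i\<in>I - J. \<not> (\<exists>\<Theta>'. hat_step a (Ms i) \<Theta>'))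
        \<and> \<Theta> = (\<lambda>N. \<Sum>j\<in>J. p j * \<Theta>s j N))"

definition weak_tau :: "dist \<Rightarrow> dist \<Rightarrow> bool" where
  "weak_tau = (dhat_step LTau)\<^sup>*\<^sup>*"

definition weak :: "label \<Rightarrow> dist \<Rightarrow> dist \<Rightarrow> bool" where
  "weak a \<Delta> \<Theta> \<longleftrightarrow> (if a = LTau then weak_tau \<Delta> \<Theta>
     else (\<exists>\<Delta>1 \<Delta>2. weak_tau \<Delta> \<Delta>1 \<and> dhat_step a \<Delta>1 \<Delta>2 \<and> weak_tau \<Delta>2 \<Theta>))"

section \<open>Matchings, Kantorovich lifting, weak simulation quasimetrics\<close>

definition marg1 :: "(net \<times> net \<Rightarrow> real) \<Rightarrow> dist" where
  "marg1 \<omega> = (\<lambda>M. \<Sum>N\<in>{N. \<omega> (M, N) \<noteq> 0}. \<omega> (M, N))"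

definition marg2 :: "(net \<times> net \<Rightarrow> real) \<Rightarrow> dist" where
  "marg2 \<omega> = (\<lambda>N. \<Sum>M\<in>{M. \<omega> (M, N) \<noteq> 0}. \<omega> (M, N))"

definition matching :: "(net \<times> net \<Rightarrow> real) \<Rightarrow> dist \<Rightarrow> dist \<Rightarrow> bool" where
  "matching \<omega> \<Delta> \<Theta> \<longleftrightarrow> finite (supp \<omega>) \<and> (\<forall>x. 0 \<le> \<omega> x) \<and> sum \<omega> (supp \<omega>) = 1
     \<and> marg1 \<omega> = \<Delta> \<and> marg2 \<omega> = \<Theta>"

text \<open>Kantorovich lifting K(d)(Delta,Theta) = min over matchings (written as Inf; the
  minimum is attained for finite-support distributions).\<close>
definition kantorovich :: "(net \<Rightarrow> net \<Rightarrow> real) \<Rightarrow> dist \<Rightarrow> dist \<Rightarrow> real" where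
  "kantorovich d \<Delta> \<Theta> =
     Inf ((\<lambda>\<omega>. \<Sum>x\<in>supp \<omega>. \<omega> x * d (fst x) (snd x)) ` {\<omega>. matching \<omega> \<Delta> \<Theta>})"

definition pad_bot :: "dist \<Rightarrow> dist" where
  "pad_bot \<Theta> = (\<lambda>N. \<Theta> N + (if N = Bot then 1 - mass \<Theta> else 0))"

definition pseudoquasimetric :: "(net \<Rightarrow> net \<Rightarrow> real) \<Rightarrow> bool" where
  "pseudoquasimetric d \<longleftrightarrow>
     (\<forall>M\<in>Nets. \<forall>N\<in>Nets. 0 \<le> d M N \<and> d M N \<le> 1)
   \<and> (\<forall>M\<in>Nets. d M M = 0)
   \<and> (\<forall>M\<in>Nets. \<forall>N\<in>Nets. \<forall>L\<in>Nets. d M N \<le> d M L + d L N)"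

definition weak_sim_quasimetric :: "(net \<Rightarrow> net \<Rightarrow> real) \<Rightarrow> bool" where
  "weak_sim_quasimetric d \<longleftrightarrow> pseudoquasimetric d \<and>
     (\<forall>M\<in>Nets. \<forall>N\<in>Nets. d M N < 1 \<longrightarrow>
        (\<forall>a \<Delta>. is_action a \<longrightarrow> trans M a \<Delta> \<longrightarrow>
           (\<exists>\<Theta>. weak a (dirac N) \<Theta> \<and> kantorovich d \<Delta> (pad_bot \<Theta>) \<le> d M N)))"

definition weak_prob_sim :: "(net \<times> net) set \<Rightarrow> bool" where
  "weak_prob_sim R \<longleftrightarrow> R \<subseteq> Nets \<times> Nets \<and>
     (\<forall>M N a \<Delta>. (M, N) \<in> R \<longrightarrow> is_action a \<longrightarrow> trans M a \<Delta> \<longrightarrow>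
        (\<exists>\<Theta> \<omega>. weak a (dirac N) \<Theta> \<and> matching \<omega> \<Delta> \<Theta>
                 \<and> (\<forall>M' N'. \<omega> (M', N') > 0 \<longrightarrow> (M', N') \<in> R)))"

end

theory Submission
  imports Defs
begin

text \<open>
  If \<open>d M N = 0\<close> and \<open>M\<close> moves to \<open>\<Delta>\<close>, the quasimetric provides a weak move of \<open>N\<close> to a
  subdistribution \<open>\<Theta>\<close> whose padding \<open>\<Psi>\<close> with \<open>\<bottom>\<close> satisfies \<open>K(d)(\<Delta>, \<Psi>) \<le> 0\<close>.
  All matchings of \<open>\<Delta>\<close> and \<open>\<Psi>\<close> live on the finite set \<open>supp \<Delta> \<times> supp \<Psi>\<close>, so by
  compactness the infimum defining \<open>K\<close> is attained; a matching of cost \<open>0\<close> only relates pairs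
  at distance \<open>0\<close>. It cannot send mass to \<open>\<bottom>\<close>: a network reached by a transition contains no
  \<open>\<bottom>\<close>, so it can receive from a name that does not occur in it, a move that \<open>\<bottom>\<close> cannot
  match weakly, hence its distance to \<open>\<bottom>\<close> is positive. So \<open>\<Theta>\<close> has full mass and the
  optimal matching already matches \<open>\<Delta>\<close> with \<open>\<Theta>\<close>.
\<close>

definition closed_proc :: "proc \<Rightarrow> bool" where
  "closed_proc P \<longleftrightarrow> wf_proc P \<and> fv P = {} \<and> fpv P = {}"

lemma wf_choice_probs_map_snd [simp]: "wf_choice_probs (map (map_prod id f) C) = wf_choice_probs C"
  unfolding wf_choice_probs_def by (simp add: case_prod_unfold o_def)

lemma fv_vsubst: "fv (vsubst x v P) = fv P - {x}"
  by (induction P arbitrary: x) (auto simp: tsubst_def split: tm.splits if_splits)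

lemma fpv_vsubst: "fpv (vsubst x v P) = fpv P"
  by (induction P arbitrary: x) auto

lemma tguarded_vsubst: "tguarded X (vsubst x v P) = tguarded X P"
  by (induction P arbitrary: x) auto

lemma wf_proc_vsubst: "wf_proc (vsubst x v P) = wf_proc P"
  by (induction P arbitrary: x) (auto simp: tguarded_vsubst)

lemma fv_psubst: "fv Q = {} \<Longrightarrow> fv (psubst X Q P) = fv P"
  by (induction P) auto

lemma fpv_psubst: "fpv Q = {} \<Longrightarrow> fpv (psubst X Q P) = fpv P - {X}"
  by (induction P) auto

lemma tguarded_if_not_free: "Y \<notin> fpv P \<Longrightarrow> tguarded Y P"
  by (induction P) auto

lemma tguarded_psubst: "tguarded Y P \<Longrightarrow> Y \<notin> fpv Q \<Longrightarrow> tguarded Y (psubst X Q P)"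
  by (induction P) (auto simp: tguarded_if_not_free)

lemma wf_proc_psubst: "wf_proc Q \<Longrightarrow> fpv Q = {} \<Longrightarrow> wf_proc P \<Longrightarrow> wf_proc (psubst X Q P)"
  by (induction P) (auto simp: tguarded_psubst)

lemma closed_proc_unfold: "closed_proc (PFix X P) \<Longrightarrow> closed_proc (psubst X (PFix X P) P)"
  unfolding closed_proc_def by (auto simp: wf_proc_psubst fv_psubst fpv_psubst)

lemma closed_proc_continuations:
  assumes "(p, Q) \<in> set C"
  shows "closed_proc (PSnd u C) \<Longrightarrow> closed_proc Q"
    and "closed_proc (PTau C) \<Longrightarrow> closed_proc Q"
    and "closed_proc (PSleep C) \<Longrightarrow> closed_proc Q"
    and "closed_proc (PRcv x B C) \<Longrightarrow> closed_proc Q"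
  using assms unfolding closed_proc_def by force+

lemma closed_proc_csubst:
  assumes "closed_proc (PRcv x C D)" "(p, Q) \<in> set (csubst x v C)"
  shows "closed_proc Q"
  using assms unfolding closed_proc_def csubst_def by (force simp: fv_vsubst fpv_vsubst wf_proc_vsubst)

lemma closed_proc_wf_choice_probs:
  "closed_proc (PSnd u C) \<Longrightarrow> wf_choice_probs C"
  "closed_proc (PTau C) \<Longrightarrow> wf_choice_probs C"
  "closed_proc (PSleep C) \<Longrightarrow> wf_choice_probs C"
  "closed_proc (PRcv x C D) \<Longrightarrow> wf_choice_probs D"
  "closed_proc (PRcv x C D) \<Longrightarrow> wf_choice_probs (csubst x v C)"
  unfolding closed_proc_def csubst_def by simp_all

lemma dirac_nonzero: "dirac M M' \<noteq> 0 \<Longrightarrow> M' = M"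
  unfolding dirac_def by (auto split: if_splits)

lemma dpar_nonzero: "dpar \<Delta> \<Theta> M' \<noteq> 0 \<Longrightarrow> \<exists>A B. M' = Par A B \<and> \<Delta> A \<noteq> 0 \<and> \<Theta> B \<noteq> 0"
  unfolding dpar_def by (cases M') auto

lemma denot_nonzero: "denot n \<nu> C N \<noteq> 0 \<Longrightarrow> \<exists>(p, Q)\<in>set C. N = Node n Q \<nu>"
  unfolding denot_def by (induction C) (auto split: if_splits)

lemma sum_supp_superset: "finite T \<Longrightarrow> supp f \<subseteq> T \<Longrightarrow> sum f (supp f) = sum f T"
  by (rule sum.mono_neutral_left) (auto simp: supp_def)

lemma supp_dirac: "supp (dirac M) = {M}"
  unfolding supp_def dirac_def by simp

lemma is_dist_dirac: "is_dist (dirac M)"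
  unfolding is_dist_def mass_def supp_dirac by (simp add: dirac_def)

lemma sum_denot:
  assumes "finite T" "\<forall>(p, Q)\<in>set C. Node n Q \<nu> \<in> T"
  shows "(\<Sum>N\<in>T. denot n \<nu> C N) = (\<Sum>pP\<leftarrow>C. fst pP)"
  using assms(2)
proof (induction C)
  case (Cons pQ C)
  have "(\<Sum>N\<in>T. denot n \<nu> (pQ # C) N)
      = (\<Sum>N\<in>T. (if N = Node n (snd pQ) \<nu> then fst pQ else 0)) + (\<Sum>N\<in>T. denot n \<nu> C N)"
    by (simp add: denot_def sum.distrib)
  with Cons assms(1) show ?case by (cases pQ) simp
qed (simp add: denot_def)

lemma is_dist_denot:
  assumes "wf_choice_probs C"
  shows "is_dist (denot n \<nu> C)"
proof -
  let ?T = "(\<lambda>(p, Q). Node n Q \<nu>) ` set C"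
  have supp: "supp (denot n \<nu> C) \<subseteq> ?T"
    unfolding supp_def by (fastforce dest: denot_nonzero)
  have "mass (denot n \<nu> C) = (\<Sum>N\<in>?T. denot n \<nu> C N)"
    unfolding mass_def by (rule sum_supp_superset[OF _ supp]) simp
  also have "\<dots> = 1"
    using assms unfolding wf_choice_probs_def by (subst sum_denot) auto
  moreover have "0 \<le> denot n \<nu> C N" for N
    unfolding denot_def by (rule sum_list_nonneg) (use assms in \<open>auto simp: wf_choice_probs_def\<close>)
  ultimately show ?thesis
    using finite_subset[OF supp] unfolding is_dist_def by simp
qed

lemma is_dist_dpar:
  assumes "is_dist \<Delta>" "is_dist \<Theta>"
  shows "is_dist (dpar \<Delta> \<Theta>)"
proof -
  have supp: "supp (dpar \<Delta> \<Theta>) = case_prod Par ` (supp \<Delta> \<times> supp \<Theta>)"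
  proof (intro set_eqI iffI)
    fix M assume "M \<in> supp (dpar \<Delta> \<Theta>)"
    then show "M \<in> case_prod Par ` (supp \<Delta> \<times> supp \<Theta>)"
      unfolding supp_def by (force dest: dpar_nonzero)
  qed (auto simp: supp_def dpar_def)
  have "inj_on (case_prod Par) (supp \<Delta> \<times> supp \<Theta>)" by (auto simp: inj_on_def)
  then have "mass (dpar \<Delta> \<Theta>) = (\<Sum>(A, B)\<in>supp \<Delta> \<times> supp \<Theta>. \<Delta> A * \<Theta> B)"
    unfolding mass_def supp by (simp add: sum.reindex case_prod_unfold dpar_def)
  also have "\<dots> = mass \<Delta> * mass \<Theta>"
    unfolding mass_def by (simp add: sum_product sum.cartesian_product)
  finally show ?thesis
    using assms unfolding is_dist_def supp by (auto simp: dpar_def split: net.splits)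
qed

section \<open>Subject reduction\<close>

definition closed_nodes :: "net \<Rightarrow> bool" where
  "closed_nodes M \<longleftrightarrow> (\<forall>(n, P, \<nu>)\<in>set (nodes M). closed_proc P)"

definition node_sig :: "net \<Rightarrow> (name \<times> name set) list" where
  "node_sig M = map (\<lambda>(n, P, \<nu>). (n, \<nu>)) (nodes M)"

lemma closed_nodes_simps [simp]:
  "closed_nodes Zero" "closed_nodes Bot"
  "closed_nodes (Par M N) \<longleftrightarrow> closed_nodes M \<and> closed_nodes N"
  "closed_nodes (Node n P \<nu>) \<longleftrightarrow> closed_proc P"
  unfolding closed_nodes_def by (simp_all add: ball_Un)

lemma node_sig_simps [simp]:
  "node_sig Zero = []" "node_sig Bot = []"
  "node_sig (Par M N) = node_sig M @ node_sig N"
  "node_sig (Node n P \<nu>) = [(n, \<nu>)]"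
  by (auto simp: node_sig_def)

lemma denot_nonzero_closed:
  assumes "denot n \<nu> C N \<noteq> 0" "\<And>p Q. (p, Q) \<in> set C \<Longrightarrow> closed_proc Q"
  shows "closed_nodes N \<and> node_sig N = [(n, \<nu>)]"
  using denot_nonzero[OF assms(1)] assms(2) by auto

lemma trans_preserves_node_sig:
  "trans M a \<Delta> \<Longrightarrow> closed_nodes M \<Longrightarrow> \<Delta> M' \<noteq> 0 \<Longrightarrow> closed_nodes M' \<and> node_sig M' = node_sig M"
proof (induction arbitrary: M' rule: trans.induct)
  case (Snd m v C \<nu>)
  then show ?case by (simp add: denot_nonzero_closed closed_proc_continuations)
next
  case (Rcv m \<nu> n x C D v)
  then show ?case by (simp add: denot_nonzero_closed closed_proc_csubst)
next
  case (Tau m C \<nu>)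
  then show ?case by (simp add: denot_nonzero_closed closed_proc_continuations)
next
  case (Timeout n x C D \<nu>)
  then show ?case by (simp add: denot_nonzero_closed closed_proc_continuations)
next
  case (Sleep n C \<nu>)
  then show ?case by (simp add: denot_nonzero_closed closed_proc_continuations)
next
  case (Rec n X P \<nu> l \<Delta>)
  then show ?case by (simp add: closed_proc_unfold)
next
  case (RcvPar M m v \<Delta> N \<Theta>)
  then obtain A B where AB: "M' = Par A B" "\<Delta> A \<noteq> 0" "\<Theta> B \<noteq> 0"
    by (blast dest: dpar_nonzero)
  with RcvPar.IH(1)[OF _ AB(2)] RcvPar.IH(2)[OF _ AB(3)] RcvPar.prems(1) show ?case by simp
next
  case (Bcast M m v \<nu> \<Delta> N \<Theta>)
  then obtain A B where AB: "M' = Par A B" "\<Delta> A \<noteq> 0" "\<Theta> B \<noteq> 0"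
    by (blast dest: dpar_nonzero)
  with Bcast.IH(1)[OF _ AB(2)] Bcast.IH(2)[OF _ AB(3)] Bcast.prems(1) show ?case by simp
next
  case (BcastSym M m v \<nu> \<Delta> N \<Theta>)
  then obtain A B where AB: "M' = Par A B" "\<Theta> A \<noteq> 0" "\<Delta> B \<noteq> 0"
    by (blast dest: dpar_nonzero)
  with BcastSym.IH(1)[OF _ AB(3)] BcastSym.IH(2)[OF _ AB(2)] BcastSym.prems(1) show ?case by simp
next
  case (TauPar M \<Delta> N)
  then obtain A where A: "M' = Par A N" "\<Delta> A \<noteq> 0"
    by (blast dest: dpar_nonzero dirac_nonzero)
  with TauPar.IH[OF _ A(2)] TauPar.prems(1) show ?case by simp
next
  case (TauParSym M \<Delta> N)
  then obtain B where B: "M' = Par N B" "\<Delta> B \<noteq> 0"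
    by (blast dest: dpar_nonzero dirac_nonzero)
  with TauParSym.IH[OF _ B(2)] TauParSym.prems(1) show ?case by simp
next
  case (SigmaPar M \<Delta> N \<Theta>)
  then obtain A B where AB: "M' = Par A B" "\<Delta> A \<noteq> 0" "\<Theta> B \<noteq> 0"
    by (blast dest: dpar_nonzero)
  with SigmaPar.IH(1)[OF _ AB(2)] SigmaPar.IH(2)[OF _ AB(3)] SigmaPar.prems(1) show ?case by simp
qed (auto dest: dirac_nonzero)

lemma nds_eq_node_sig: "nds M = fst ` set (node_sig M)"
  by (induction M) auto

lemma node_in_node_sig: "(n, P, \<nu>) \<in> set (nodes M) \<Longrightarrow> (n, \<nu>) \<in> set (node_sig M)"
  unfolding node_sig_def by force

lemma node_sig_in_nodes: "(n, \<nu>) \<in> set (node_sig M) \<Longrightarrow> \<exists>P. (n, P, \<nu>) \<in> set (nodes M)"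
  unfolding node_sig_def by force

lemma nbr_edges_node_sig:
  "nbr_edges M = {(n, m). \<exists>\<nu>. (n, \<nu>) \<in> set (node_sig M) \<and> m \<in> \<nu> \<and> m \<in> nds M}"
  unfolding nbr_edges_def by (blast dest: node_in_node_sig node_sig_in_nodes)

lemma wf_net_iff_node_sig:
  "wf_net M \<longleftrightarrow> closed_nodes M
     \<and> (\<forall>(n, \<nu>)\<in>set (node_sig M). n \<notin> \<nu>)
     \<and> distinct (map fst (node_sig M))
     \<and> (\<forall>(n, \<nu>)\<in>set (node_sig M). \<forall>(m, \<mu>)\<in>set (node_sig M). m \<in> \<nu> \<longleftrightarrow> n \<in> \<mu>)
     \<and> (\<forall>n\<in>nds M. \<forall>m\<in>nds M. (n, m) \<in> (nbr_edges M)\<^sup>*)"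
proof -
  have "map fst (node_sig M) = map fst (nodes M)"
    unfolding node_sig_def by (simp add: case_prod_unfold)
  moreover have "set (node_sig M) = (\<lambda>(n, P, \<nu>). (n, \<nu>)) ` set (nodes M)"
    unfolding node_sig_def by simp
  ultimately show ?thesis
    unfolding wf_net_def closed_nodes_def closed_proc_def by (auto simp: case_prod_unfold)
qed

lemma wf_net_node_sig_cong:
  assumes "wf_net M" "closed_nodes M'" "node_sig M' = node_sig M"
  shows "wf_net M'"
proof -
  have "nds M' = nds M" "nbr_edges M' = nbr_edges M"
    using assms(3) by (simp_all add: nds_eq_node_sig nbr_edges_node_sig)
  with assms show ?thesis unfolding wf_net_iff_node_sig by simp
qed

lemma trans_target_Nets: "trans M a \<Delta> \<Longrightarrow> M \<in> Nets \<Longrightarrow> \<Delta> M' \<noteq> 0 \<Longrightarrow> M' \<in> Nets"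
  unfolding Nets_def
  by (metis mem_Collect_eq trans_preserves_node_sig wf_net_iff_node_sig wf_net_node_sig_cong)

lemma trans_is_dist: "trans M a \<Delta> \<Longrightarrow> closed_nodes M \<Longrightarrow> is_dist \<Delta>"
  by (induction rule: trans.induct)
    (auto intro!: is_dist_denot is_dist_dpar is_dist_dirac
      simp: closed_proc_wf_choice_probs closed_proc_unfold)

lemma trans_Nets_dist:
  assumes "trans M a \<Delta>" "M \<in> Nets"
  shows "is_dist \<Delta> \<and> supp \<Delta> \<subseteq> Nets"
proof -
  have "closed_nodes M" using assms(2) unfolding Nets_def wf_net_iff_node_sig by simp
  with assms show ?thesis
    using trans_is_dist trans_target_Nets unfolding supp_def by blast
qed

lemma Bot_in_Nets: "Bot \<in> Nets"
  unfolding Nets_def wf_net_def nbr_edges_def by simp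

section \<open>Stuck components\<close>

primrec bot_free :: "net \<Rightarrow> bool" where
  "bot_free Zero = True"
| "bot_free (Par M N) = (bot_free M \<and> bot_free N)"
| "bot_free (Node n P \<nu>) = True"
| "bot_free Bot = False"

lemma scong_Par_Bot_if_not_bot_free: "\<not> bot_free N \<Longrightarrow> \<exists>N'. scong N (Par Bot N')"
proof (induction N)
  case Bot
  then show ?case using sc_sym sc_unit by blast
next
  case (Par A B)
  show ?case
  proof (cases "bot_free A")
    case False
    with Par.IH(1) obtain A' where "scong A (Par Bot A')" by blast
    then have "scong (Par A B) (Par (Par Bot A') B)" by (intro sc_par sc_refl)
    then show ?thesis using sc_assoc sc_trans by blast
  next
    case True
    with Par obtain B' where "scong B (Par Bot B')" by auto
    then have "scong (Par A B) (Par (Par Bot B') A)"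
      using sc_par[OF sc_refl] sc_comm sc_trans by blast
    then show ?thesis using sc_assoc sc_trans by blast
  qed
qed auto

lemma trans_bot_free: "trans M a \<Delta> \<Longrightarrow> bot_free M \<and> (\<forall>M'. \<Delta> M' \<noteq> 0 \<longrightarrow> bot_free M')"
proof (induction rule: trans.induct)
  case (TauPar M \<Delta> N)
  then show ?case using scong_Par_Bot_if_not_bot_free by (fastforce dest: dpar_nonzero dirac_nonzero)
next
  case (TauParSym M \<Delta> N)
  then show ?case using scong_Par_Bot_if_not_bot_free by (fastforce dest: dpar_nonzero dirac_nonzero)
qed (auto dest!: dpar_nonzero dirac_nonzero denot_nonzero)

lemma trans_source_not_Bot: "trans M a \<Delta> \<Longrightarrow> M \<noteq> Bot"
  by (induction rule: trans.induct) auto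

section \<open>Receiving from a fresh name\<close>

inductive unfolds_to_rcv :: "proc \<Rightarrow> bool" where
  "unfolds_to_rcv (PRcv x C D)"
| "unfolds_to_rcv (psubst X (PFix X P) P) \<Longrightarrow> unfolds_to_rcv (PFix X P)"

lemma unfolds_to_rcv_PFix_iff:
  "unfolds_to_rcv (PFix X P) \<longleftrightarrow> unfolds_to_rcv (psubst X (PFix X P) P)"
  by (auto elim: unfolds_to_rcv.cases intro: unfolds_to_rcv.intros)

text \<open>\<open>rcv\<close> is stated up to structural congruence; the set of receiving nodes is a
  \<open>scong\<close>-invariant that turns it into the syntactic property \<open>unfolds_to_rcv\<close>.\<close>

definition receiving_nodes :: "net \<Rightarrow> (name \<times> name set) set" where
  "receiving_nodes M = {(n, \<nu>). \<exists>P. (n, P, \<nu>) \<in> set (nodes M) \<and> unfolds_to_rcv P}"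

lemma receiving_nodes_simps [simp]:
  "receiving_nodes Zero = {}" "receiving_nodes Bot = {}"
  "receiving_nodes (Par M N) = receiving_nodes M \<union> receiving_nodes N"
  "receiving_nodes (Node n P \<nu>) = (if unfolds_to_rcv P then {(n, \<nu>)} else {})"
  unfolding receiving_nodes_def by auto

lemma scong_receiving_nodes: "scong M N \<Longrightarrow> receiving_nodes M = receiving_nodes N"
  by (induction rule: scong.induct) (auto simp: unfolds_to_rcv_PFix_iff)

lemma rcv_imp_unfolds_to_rcv: "rcv n \<nu> P \<Longrightarrow> unfolds_to_rcv P"
  unfolding rcv_def
  by (auto dest!: scong_receiving_nodes split: if_splits intro: unfolds_to_rcv.intros)

lemma unfolds_to_rcv_trans_LRcv:
  "unfolds_to_rcv P \<Longrightarrow> m \<in> \<nu> \<Longrightarrow> \<exists>\<Delta>. trans (Node n P \<nu>) (LRcv m v) \<Delta>"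
  by (induction rule: unfolds_to_rcv.induct) (auto intro: trans.Rcv trans.Rec)

lemma bot_free_trans_LRcv:
  "bot_free M \<Longrightarrow> m \<notin> nds M \<Longrightarrow> \<exists>\<Delta>. trans M (LRcv m v) \<Delta>"
proof (induction M)
  case (Node n P \<nu>)
  then show ?case
    using unfolds_to_rcv_trans_LRcv[OF rcv_imp_unfolds_to_rcv] trans.RcvEnb by fastforce
qed (auto intro: trans.RcvZero trans.RcvPar)

lemma finite_nds: "finite (nds M)"
  by (induction M) auto

definition subdist :: "dist \<Rightarrow> bool" where
  "subdist \<Theta> \<longleftrightarrow> finite (supp \<Theta>) \<and> (\<forall>N. 0 \<le> \<Theta> N) \<and> mass \<Theta> \<le> 1"

lemma mixture_supp_mass:
  assumes "finite J" "\<And>j. j \<in> J \<Longrightarrow> is_dist (Ts j)" "\<And>j. j \<in> J \<Longrightarrow> 0 \<le> p j"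
    and T_def: "T = (\<lambda>N. \<Sum>j\<in>J. p j * Ts j N)"
  shows "supp T \<subseteq> (\<Union>j\<in>J. supp (Ts j))" and "finite (supp T)" and "\<forall>N. 0 \<le> T N"
    and "mass T = (\<Sum>j\<in>J. p j)"
proof -
  let ?U = "\<Union>j\<in>J. supp (Ts j)"
  have fin: "finite ?U" using assms(1,2) unfolding is_dist_def by auto
  show supp: "supp T \<subseteq> ?U"
    unfolding T_def supp_def by (auto intro: ccontr)
  then show "finite (supp T)" using fin by (rule finite_subset)
  show "\<forall>N. 0 \<le> T N"
    using assms(2,3) unfolding T_def is_dist_def by (auto intro: sum_nonneg)
  have "mass T = (\<Sum>N\<in>?U. \<Sum>j\<in>J. p j * Ts j N)"
    unfolding mass_def T_def using sum_supp_superset[OF fin supp] by (simp add: T_def)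
  also have "\<dots> = (\<Sum>j\<in>J. p j * (\<Sum>N\<in>?U. Ts j N))"
    by (subst sum.swap) (simp add: sum_distrib_left)
  also have "\<dots> = (\<Sum>j\<in>J. p j * mass (Ts j))"
    unfolding mass_def using fin by (intro sum.cong refl) (subst sum_supp_superset, auto)
  also have "\<dots> = (\<Sum>j\<in>J. p j)"
    using assms(2) unfolding is_dist_def by simp
  finally show "mass T = (\<Sum>j\<in>J. p j)" .
qed

lemma dhat_stepE:
  assumes "dhat_step a \<Delta> \<Theta>"
  obtains I p Ms J \<Theta>s where "finite (I :: nat set)" "\<forall>i\<in>I. 0 < p i"
    "\<Delta> = (\<lambda>N. \<Sum>i\<in>I. p i * dirac (Ms i) N)" "\<forall>i\<in>I. 0 < \<Delta> (Ms i)"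
    "J \<subseteq> I" "J \<noteq> {}" "\<forall>j\<in>J. hat_step a (Ms j) (\<Theta>s j)"
    "\<Theta> = (\<lambda>N. \<Sum>j\<in>J. p j * \<Theta>s j N)"
proof -
  from assms obtain I p Ms J \<Theta>s where A: "finite (I :: nat set)" "\<forall>i\<in>I. 0 < p i"
    "\<Delta> = (\<lambda>N. \<Sum>i\<in>I. p i * dirac (Ms i) N)"
    "J \<subseteq> I" "J \<noteq> {}" "\<forall>j\<in>J. hat_step a (Ms j) (\<Theta>s j)"
    "\<Theta> = (\<lambda>N. \<Sum>j\<in>J. p j * \<Theta>s j N)"
    unfolding dhat_step_def by blast
  have "0 < \<Delta> (Ms i)" if "i \<in> I" for i
  proof -
    have "p i * dirac (Ms i) (Ms i) \<le> (\<Sum>i'\<in>I. p i' * dirac (Ms i') (Ms i))"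
      using A(1,2) that by (intro member_le_sum) (auto simp: dirac_def less_imp_le)
    moreover have "0 < p i" using A(2) that by blast
    ultimately show ?thesis unfolding A(3) by (simp add: dirac_def)
  qed
  with A that show ?thesis by blast
qed

lemma dhat_step_subdist:
  assumes step: "dhat_step a \<Delta> \<Theta>" and "subdist \<Delta>" "supp \<Delta> \<subseteq> A"
    and closed: "\<And>M \<Theta>'. M \<in> A \<Longrightarrow> hat_step a M \<Theta>' \<Longrightarrow> is_dist \<Theta>' \<and> supp \<Theta>' \<subseteq> A"
  shows "subdist \<Theta> \<and> supp \<Theta> \<subseteq> A"
proof -
  obtain I p Ms J \<Theta>s where I: "finite (I :: nat set)" "\<forall>i\<in>I. 0 < p i"
      "\<Delta> = (\<lambda>N. \<Sum>i\<in>I. p i * dirac (Ms i) N)" "\<forall>i\<in>I. 0 < \<Delta> (Ms i)"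
    and J: "J \<subseteq> I" "\<forall>j\<in>J. hat_step a (Ms j) (\<Theta>s j)"
    and \<Theta>: "\<Theta> = (\<lambda>N. \<Sum>j\<in>J. p j * \<Theta>s j N)"
    using step by (rule dhat_stepE)
  have "finite J" using I(1) J(1) by (rule finite_subset[rotated])
  have "Ms j \<in> A" if "j \<in> J" for j
    using I(4) J(1) that assms(3) unfolding supp_def by force
  then have \<Theta>s: "is_dist (\<Theta>s j) \<and> supp (\<Theta>s j) \<subseteq> A" if "j \<in> J" for j
    using closed J(2) that by blast
  have p: "0 \<le> p i" if "i \<in> I" for i using I(2) that by (simp add: less_imp_le)
  note mix\<Theta> = mixture_supp_mass[OF \<open>finite J\<close> conjunct1[OF \<Theta>s] p[OF subsetD[OF J(1)]] \<Theta>]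
  note mix\<Delta> = mixture_supp_mass[OF I(1) is_dist_dirac p I(3)]
  have "(\<Sum>j\<in>J. p j) \<le> (\<Sum>i\<in>I. p i)"
    using I(1) J(1) p by (intro sum_mono2) auto
  then have "mass \<Theta> \<le> mass \<Delta>"
    using mix\<Theta>(4) mix\<Delta>(4) by simp
  with \<open>subdist \<Delta>\<close> have "mass \<Theta> \<le> 1" unfolding subdist_def by simp
  with mix\<Theta> \<Theta>s show ?thesis unfolding subdist_def by blast
qed

lemma weak_subdist:
  assumes "weak a \<Delta> \<Theta>" "subdist \<Delta>" "supp \<Delta> \<subseteq> A"
    and closed: "\<And>b M \<Theta>'. M \<in> A \<Longrightarrow> hat_step b M \<Theta>' \<Longrightarrow> is_dist \<Theta>' \<and> supp \<Theta>' \<subseteq> A"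
  shows "subdist \<Theta> \<and> supp \<Theta> \<subseteq> A"
proof -
  have tau: "subdist \<Theta>2 \<and> supp \<Theta>2 \<subseteq> A"
    if "weak_tau \<Theta>1 \<Theta>2" "subdist \<Theta>1 \<and> supp \<Theta>1 \<subseteq> A" for \<Theta>1 \<Theta>2
    using that unfolding weak_tau_def
  proof (induction rule: rtranclp_induct)
    case (step \<Theta>' \<Theta>'')
    then show ?case by (intro dhat_step_subdist[OF step.hyps(2)] closed) auto
  qed
  show ?thesis
  proof (cases "a = LTau")
    case True
    then show ?thesis using assms(1-3) tau unfolding weak_def by simp
  next
    case False
    then obtain \<Delta>1 \<Delta>2 where "weak_tau \<Delta> \<Delta>1" "dhat_step a \<Delta>1 \<Delta>2" "weak_tau \<Delta>2 \<Theta>"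
      using assms(1) unfolding weak_def by auto
    with assms(2,3) tau have "subdist \<Delta>2 \<and> supp \<Delta>2 \<subseteq> A"
      by (intro dhat_step_subdist[of a \<Delta>1] closed) auto
    with \<open>weak_tau \<Delta>2 \<Theta>\<close> show ?thesis by (rule tau)
  qed
qed

lemma hat_step_Nets:
  assumes "M \<in> Nets" "hat_step a M \<Theta>"
  shows "is_dist \<Theta> \<and> supp \<Theta> \<subseteq> Nets"
proof -
  have "trans M a \<Theta> \<or> \<Theta> = dirac M"
    using assms(2) unfolding hat_step_def by (auto split: if_splits)
  then show ?thesis
    using assms(1) trans_Nets_dist is_dist_dirac supp_dirac by auto
qed

lemma weak_dirac_subdist_Nets:
  assumes "weak a (dirac N) \<Theta>" "N \<in> Nets"
  shows "subdist \<Theta> \<and> supp \<Theta> \<subseteq> Nets"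
proof -
  have "subdist (dirac N)" using is_dist_dirac[of N] unfolding subdist_def is_dist_def by simp
  with assms show ?thesis
    by (intro weak_subdist[OF assms(1)]) (auto simp: supp_dirac dest: hat_step_Nets)
qed

lemma dhat_step_from_Bot:
  assumes "dhat_step a \<Delta> \<Theta>" "supp \<Delta> \<subseteq> {Bot}"
  shows "a = LTau \<and> supp \<Theta> \<subseteq> {Bot}"
proof -
  obtain I p Ms J \<Theta>s where "finite (I :: nat set)" "\<forall>i\<in>I. 0 < p i"
      "\<Delta> = (\<lambda>N. \<Sum>i\<in>I. p i * dirac (Ms i) N)" and I: "\<forall>i\<in>I. 0 < \<Delta> (Ms i)"
    and J: "J \<subseteq> I" "J \<noteq> {}" "\<forall>j\<in>J. hat_step a (Ms j) (\<Theta>s j)"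
    and \<Theta>: "\<Theta> = (\<lambda>N. \<Sum>j\<in>J. p j * \<Theta>s j N)"
    using assms(1) by (rule dhat_stepE)
  have "Ms j \<in> supp \<Delta>" if "j \<in> J" for j
    using I J(1) that unfolding supp_def by fastforce
  then have hat: "hat_step a Bot (\<Theta>s j)" if "j \<in> J" for j
    using J(3) that assms(2) by fastforce
  then have Bot_steps: "a = LTau \<and> \<Theta>s j = dirac Bot" if "j \<in> J" for j
    using hat[OF that] trans_source_not_Bot unfolding hat_step_def by (auto split: if_splits)
  have "\<Theta> N = 0" if "N \<noteq> Bot" for N
    unfolding \<Theta> using Bot_steps that by (simp add: dirac_def)
  with J(2) Bot_steps show ?thesis unfolding supp_def by blast
qed

lemma weak_from_dirac_Bot:
  assumes "weak a (dirac Bot) \<Theta>"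
  shows "a = LTau"
proof (rule ccontr)
  have tau: "supp \<Theta>2 \<subseteq> {Bot}" if "weak_tau \<Theta>1 \<Theta>2" "supp \<Theta>1 \<subseteq> {Bot}" for \<Theta>1 \<Theta>2
    using that unfolding weak_tau_def
  proof (induction rule: rtranclp_induct)
    case (step \<Theta>' \<Theta>'')
    then show ?case using dhat_step_from_Bot by blast
  qed
  assume "a \<noteq> LTau"
  with assms obtain \<Delta>1 \<Delta>2 where "weak_tau (dirac Bot) \<Delta>1" "dhat_step a \<Delta>1 \<Delta>2"
    unfolding weak_def by auto
  with \<open>a \<noteq> LTau\<close> show False
    using tau[OF _ equalityD1[OF supp_dirac]] dhat_step_from_Bot by blast
qed

section \<open>Optimal matchings\<close>

definition matching_cost :: "(net \<Rightarrow> net \<Rightarrow> real) \<Rightarrow> (net \<times> net \<Rightarrow> real) \<Rightarrow> real" where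
  "matching_cost d \<omega> = (\<Sum>x\<in>supp \<omega>. \<omega> x * d (fst x) (snd x))"

lemma marg1_eq_sum: "supp \<omega> \<subseteq> UNIV \<times> B \<Longrightarrow> finite B \<Longrightarrow> marg1 \<omega> M = (\<Sum>N\<in>B. \<omega> (M, N))"
  unfolding marg1_def by (rule sum.mono_neutral_left) (auto simp: supp_def)

lemma marg2_eq_sum: "supp \<omega> \<subseteq> A \<times> UNIV \<Longrightarrow> finite A \<Longrightarrow> marg2 \<omega> N = (\<Sum>M\<in>A. \<omega> (M, N))"
  unfolding marg2_def by (rule sum.mono_neutral_left) (auto simp: supp_def)

lemma matching_supp:
  assumes "matching \<omega> \<Delta> \<Psi>"
  shows "supp \<omega> \<subseteq> supp \<Delta> \<times> supp \<Psi>"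
proof (clarsimp simp: supp_def)
  fix M N assume "\<omega> (M, N) \<noteq> 0"
  with assms have pos: "0 < \<omega> (M, N)" unfolding matching_def by (metis less_eq_real_def)
  have fin: "finite (supp \<omega>)" and nonneg: "\<forall>x. 0 \<le> \<omega> x"
    using assms unfolding matching_def by auto
  have "finite {N'. \<omega> (M, N') \<noteq> 0}"
    by (rule finite_subset[OF _ finite_imageI[OF fin, of snd]]) (force simp: supp_def)
  then have "\<omega> (M, N) \<le> marg1 \<omega> M"
    unfolding marg1_def using pos nonneg by (intro member_le_sum) auto
  moreover have "finite {M'. \<omega> (M', N) \<noteq> 0}"
    by (rule finite_subset[OF _ finite_imageI[OF fin, of fst]]) (force simp: supp_def)
  then have "\<omega> (M, N) \<le> marg2 \<omega> N"
    unfolding marg2_def using pos nonneg by (intro member_le_sum) auto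
  ultimately show "\<Delta> M \<noteq> 0 \<and> \<Psi> N \<noteq> 0"
    using assms pos unfolding matching_def by auto
qed

lemma matching_nonneg: "matching \<omega> \<Delta> \<Psi> \<Longrightarrow> 0 \<le> \<omega> x"
  unfolding matching_def by blast

lemma matching_le_1:
  assumes "matching \<omega> \<Delta> \<Psi>"
  shows "\<omega> x \<le> 1"
proof (cases "x \<in> supp \<omega>")
  case True
  with assms have "\<omega> x \<le> sum \<omega> (supp \<omega>)"
    unfolding matching_def by (intro member_le_sum) auto
  with assms show ?thesis unfolding matching_def by simp
qed (simp add: supp_def)

lemma matching_product:
  assumes "is_dist \<Delta>" "is_dist \<Psi>"
  shows "matching (\<lambda>x. \<Delta> (fst x) * \<Psi> (snd x)) \<Delta> \<Psi>"
proof -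
  let ?\<omega> = "\<lambda>x. \<Delta> (fst x) * \<Psi> (snd x)"
  have supp: "supp ?\<omega> = supp \<Delta> \<times> supp \<Psi>" unfolding supp_def by auto
  have fin: "finite (supp \<Delta>)" "finite (supp \<Psi>)" and mass: "mass \<Delta> = 1" "mass \<Psi> = 1"
    using assms unfolding is_dist_def by auto
  have "sum ?\<omega> (supp ?\<omega>) = mass \<Delta> * mass \<Psi>"
    unfolding supp mass_def by (simp add: sum_product sum.cartesian_product case_prod_unfold)
  moreover have "marg1 ?\<omega> M = \<Delta> M" for M
  proof -
    have "marg1 ?\<omega> M = (\<Sum>N\<in>supp \<Psi>. \<Delta> M * \<Psi> N)"
      using fin(2) by (subst marg1_eq_sum) (auto simp: supp)
    also have "\<dots> = \<Delta> M" using mass(2) by (simp add: mass_def sum_distrib_left[symmetric])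
    finally show ?thesis .
  qed
  moreover have "marg2 ?\<omega> N = \<Psi> N" for N
  proof -
    have "marg2 ?\<omega> N = (\<Sum>M\<in>supp \<Delta>. \<Delta> M * \<Psi> N)"
      using fin(1) by (subst marg2_eq_sum) (auto simp: supp)
    also have "\<dots> = \<Psi> N" using mass(1) by (simp add: mass_def sum_distrib_right[symmetric])
    finally show ?thesis .
  qed
  moreover have "0 \<le> ?\<omega> x" for x using assms unfolding is_dist_def by simp
  ultimately show ?thesis
    using fin mass unfolding matching_def supp by auto
qed

lemma bounded_pointwise_convergent_subseq:
  fixes f :: "nat \<Rightarrow> 'a \<Rightarrow> real"
  assumes "finite S" "\<And>k x. \<bar>f k x\<bar> \<le> B"
  shows "\<exists>r. strict_mono r \<and> (\<forall>x\<in>S. convergent (\<lambda>k. f (r k) x))"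
  using assms(1)
proof (induction S rule: finite_induct)
  case empty
  have "strict_mono (id :: nat \<Rightarrow> nat)" by (simp add: strict_mono_def)
  then show ?case by blast
next
  case (insert x S)
  then obtain r where r: "strict_mono r" "\<forall>y\<in>S. convergent (\<lambda>k. f (r k) y)" by blast
  obtain r' where r': "strict_mono r'" "monoseq (\<lambda>k. f (r (r' k)) x)"
    using seq_monosub[of "\<lambda>k. f (r k) x"] by blast
  have "Bseq (\<lambda>k. f (r (r' k)) x)" using assms(2) by (intro BseqI') simp
  then have "convergent (\<lambda>k. f (r (r' k)) x)" using r'(2) by (rule Bseq_monoseq_convergent)
  moreover have "convergent (\<lambda>k. f (r (r' k)) y)" if "y \<in> S" for y
    using convergent_subseq_convergent[OF bspec[OF r(2) that] r'(1)] by (simp add: o_def)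
  moreover have "strict_mono (r \<circ> r')" using r(1) r'(1) by (rule strict_mono_o)
  ultimately show ?case by (intro exI[of _ "r \<circ> r'"]) (auto simp: o_def)
qed

lemma sum_limit_eq_const:
  fixes f :: "nat \<Rightarrow> 'a \<Rightarrow> real"
  assumes "\<And>y. (\<lambda>k. f k y) \<longlonglongrightarrow> l y" "\<And>k. (\<Sum>y\<in>A. f k y) = c"
  shows "(\<Sum>y\<in>A. l y) = c"
proof -
  have "(\<lambda>k. \<Sum>y\<in>A. f k y) \<longlonglongrightarrow> (\<Sum>y\<in>A. l y)" by (intro tendsto_sum assms(1))
  then show ?thesis using assms(2) by (simp add: LIMSEQ_const_iff)
qed

lemma matching_limit:
  assumes fin: "finite (supp \<Delta>)" "finite (supp \<Psi>)"
    and W: "\<And>k. matching (W k) \<Delta> \<Psi>" and lim: "\<And>x. (\<lambda>k. W k x) \<longlonglongrightarrow> \<omega> x"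
  shows "matching \<omega> \<Delta> \<Psi>"
proof -
  let ?S = "supp \<Delta> \<times> supp \<Psi>"
  have WS: "supp (W k) \<subseteq> ?S" for k using W by (rule matching_supp)
  have "\<omega> x = 0" if "x \<notin> ?S" for x
  proof -
    have "(\<lambda>k. W k x) = (\<lambda>k. 0)" using WS that unfolding supp_def by fastforce
    with lim[of x] show ?thesis by (simp add: LIMSEQ_const_iff)
  qed
  then have supp: "supp \<omega> \<subseteq> ?S" unfolding supp_def by blast
  have "0 \<le> \<omega> x" for x
    using W lim[of x] unfolding matching_def by (intro LIMSEQ_le_const) (auto simp del: split_paired_All)
  moreover have "sum \<omega> ?S = 1"
  proof (rule sum_limit_eq_const[OF lim])
    show "sum (W k) ?S = 1" for k
      using W[of k] sum_supp_superset[OF _ WS] fin unfolding matching_def by simp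
  qed
  moreover have "marg1 \<omega> M = \<Delta> M" for M
  proof -
    have "(\<Sum>N\<in>supp \<Psi>. \<omega> (M, N)) = \<Delta> M"
    proof (rule sum_limit_eq_const[OF lim])
      fix k
      have "supp (W k) \<subseteq> UNIV \<times> supp \<Psi>" using WS[of k] by blast
      then have "marg1 (W k) M = (\<Sum>N\<in>supp \<Psi>. W k (M, N))" using fin(2) by (rule marg1_eq_sum)
      then show "(\<Sum>N\<in>supp \<Psi>. W k (M, N)) = \<Delta> M" using W[of k] unfolding matching_def by simp
    qed
    then show ?thesis using supp fin by (subst marg1_eq_sum) auto
  qed
  moreover have "marg2 \<omega> N = \<Psi> N" for N
  proof -
    have "(\<Sum>M\<in>supp \<Delta>. \<omega> (M, N)) = \<Psi> N"
    proof (rule sum_limit_eq_const[OF lim])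
      fix k
      have "supp (W k) \<subseteq> supp \<Delta> \<times> UNIV" using WS[of k] by blast
      then have "marg2 (W k) N = (\<Sum>M\<in>supp \<Delta>. W k (M, N))" using fin(1) by (rule marg2_eq_sum)
      then show "(\<Sum>M\<in>supp \<Delta>. W k (M, N)) = \<Psi> N" using W[of k] unfolding matching_def by simp
    qed
    then show ?thesis using supp fin by (subst marg2_eq_sum) auto
  qed
  ultimately show ?thesis
    using finite_subset[OF supp] fin sum_supp_superset[OF _ supp]
    unfolding matching_def by auto
qed

lemma matching_cost_eq_sum:
  "finite S \<Longrightarrow> supp \<omega> \<subseteq> S \<Longrightarrow> matching_cost d \<omega> = (\<Sum>x\<in>S. \<omega> x * d (fst x) (snd x))"
  unfolding matching_cost_def by (rule sum.mono_neutral_left) (auto simp: supp_def)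

lemma kantorovich_le_imp_matching:
  assumes \<Delta>: "is_dist \<Delta>" and \<Psi>: "is_dist \<Psi>" and "kantorovich d \<Delta> \<Psi> \<le> c"
  shows "\<exists>\<omega>. matching \<omega> \<Delta> \<Psi> \<and> matching_cost d \<omega> \<le> c"
proof -
  let ?S = "supp \<Delta> \<times> supp \<Psi>"
  have fin: "finite (supp \<Delta>)" "finite (supp \<Psi>)" using \<Delta> \<Psi> unfolding is_dist_def by auto
  then have "finite ?S" by simp
  have approx: "\<forall>k. \<exists>\<omega>. matching \<omega> \<Delta> \<Psi> \<and> matching_cost d \<omega> < c + inverse (real (Suc k))"
  proof
    fix k
    let ?C = "matching_cost d ` {\<omega>. matching \<omega> \<Delta> \<Psi>}"
    have "?C \<noteq> {}" using matching_product[OF \<Delta> \<Psi>] by blast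
    moreover have "Inf ?C = kantorovich d \<Delta> \<Psi>"
      unfolding kantorovich_def matching_cost_def by simp
    then have "Inf ?C < c + inverse (real (Suc k))"
    proof -
      have "0 < inverse (real (Suc k))" by simp
      with \<open>Inf ?C = kantorovich d \<Delta> \<Psi>\<close> assms(3) show ?thesis by linarith
    qed
    ultimately have "\<exists>x\<in>?C. x < c + inverse (real (Suc k))" by (rule cInf_lessD)
    then show "\<exists>\<omega>. matching \<omega> \<Delta> \<Psi> \<and> matching_cost d \<omega> < c + inverse (real (Suc k))" by auto
  qed
  obtain W where "\<forall>k. matching (W k) \<Delta> \<Psi> \<and> matching_cost d (W k) < c + inverse (real (Suc k))"
    using choice[OF approx] by blast
  then have W: "\<And>k. matching (W k) \<Delta> \<Psi>"
    and cost: "\<And>k. matching_cost d (W k) < c + inverse (real (Suc k))"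
    by blast+
  have "\<bar>W k x\<bar> \<le> 1" for k x
    using matching_nonneg[OF W] matching_le_1[OF W] by (simp add: abs_le_iff)
  then obtain r where r: "strict_mono r" "\<forall>x\<in>?S. convergent (\<lambda>k. W (r k) x)"
    using bounded_pointwise_convergent_subseq[OF \<open>finite ?S\<close>] by blast
  define \<omega> where "\<omega> x = lim (\<lambda>k. W (r k) x)" for x
  have "convergent (\<lambda>k. W (r k) x)" for x
  proof (cases "x \<in> ?S")
    case False
    then have "(\<lambda>k. W (r k) x) = (\<lambda>k. 0)" using matching_supp[OF W] unfolding supp_def by fastforce
    then show ?thesis by (simp add: convergent_const)
  qed (use r(2) in blast)
  then have lim: "(\<lambda>k. W (r k) x) \<longlonglongrightarrow> \<omega> x" for x
    unfolding \<omega>_def by (simp add: convergent_LIMSEQ_iff)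
  have "matching \<omega> \<Delta> \<Psi>" using fin W lim by (rule matching_limit)
  moreover have "matching_cost d \<omega> \<le> c"
  proof -
    have lim_cost: "(\<lambda>k. matching_cost d (W (r k))) \<longlonglongrightarrow> matching_cost d \<omega>"
      using matching_supp[OF W] matching_supp[OF \<open>matching \<omega> \<Delta> \<Psi>\<close>]
      by (simp add: matching_cost_eq_sum[OF \<open>finite ?S\<close>] tendsto_sum tendsto_mult_right lim)
    have lim_bound: "(\<lambda>k. c + inverse (real (Suc k))) \<longlonglongrightarrow> c"
      using tendsto_add[OF tendsto_const LIMSEQ_inverse_real_of_nat] by simp
    have "matching_cost d (W (r k)) \<le> c + inverse (real (Suc k))" for k
    proof -
      have "inverse (real (Suc (r k))) \<le> inverse (real (Suc k))"
        using seq_suble[OF r(1), of k] by (simp add: le_imp_inverse_le)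
      then show ?thesis using cost[of "r k"] by linarith
    qed
    then show ?thesis by (intro LIMSEQ_le[OF lim_cost lim_bound]) auto
  qed
  ultimately show ?thesis by blast
qed

lemma matching_cost_nonpos_imp_zero:
  assumes "matching \<omega> \<Delta> \<Psi>" "matching_cost d \<omega> \<le> 0"
    and nonneg: "\<And>M N. M \<in> supp \<Delta> \<Longrightarrow> N \<in> supp \<Psi> \<Longrightarrow> 0 \<le> d M N" and "0 < \<omega> (M, N)"
  shows "M \<in> supp \<Delta> \<and> N \<in> supp \<Psi> \<and> d M N = 0"
proof -
  have supp: "supp \<omega> \<subseteq> supp \<Delta> \<times> supp \<Psi>" using assms(1) by (rule matching_supp)
  have terms: "\<forall>y\<in>supp \<omega>. 0 \<le> \<omega> y * d (fst y) (snd y)"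
    using nonneg supp matching_nonneg[OF assms(1)] by (auto intro!: mult_nonneg_nonneg)
  then have "matching_cost d \<omega> = 0"
    using assms(2) unfolding matching_cost_def by (simp add: sum_nonneg antisym)
  moreover have "finite (supp \<omega>)" using assms(1) unfolding matching_def by simp
  ultimately have "\<forall>y\<in>supp \<omega>. \<omega> y * d (fst y) (snd y) = 0"
    using terms unfolding matching_cost_def by (simp add: sum_nonneg_eq_0_iff)
  moreover have "(M, N) \<in> supp \<omega>" using assms(4) unfolding supp_def by simp
  ultimately show ?thesis using assms(4) supp by auto
qed

lemma supp_pad_bot: "supp (pad_bot \<Theta>) \<subseteq> insert Bot (supp \<Theta>)"
  unfolding supp_def pad_bot_def by auto

lemma is_dist_pad_bot:
  assumes "subdist \<Theta>"
  shows "is_dist (pad_bot \<Theta>)"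
proof -
  let ?T = "insert Bot (supp \<Theta>)"
  have fin: "finite ?T" using assms unfolding subdist_def by simp
  have "mass (pad_bot \<Theta>) = (\<Sum>N\<in>?T. pad_bot \<Theta> N)"
    unfolding mass_def using fin supp_pad_bot by (rule sum_supp_superset)
  also have "\<dots> = (\<Sum>N\<in>?T. \<Theta> N) + (1 - mass \<Theta>)"
    unfolding pad_bot_def using fin by (simp add: sum.distrib)
  also have "(\<Sum>N\<in>?T. \<Theta> N) = mass \<Theta>"
    unfolding mass_def using fin by (intro sum_supp_superset[symmetric]) auto
  finally show ?thesis
    using assms finite_subset[OF supp_pad_bot fin] unfolding subdist_def is_dist_def pad_bot_def
    by auto
qed

lemma matching_pad_bot_unused:
  assumes "matching \<omega> \<Delta> (pad_bot \<Theta>)" "subdist \<Theta>" "\<And>M. \<not> 0 < \<omega> (M, Bot)"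
  shows "matching \<omega> \<Delta> \<Theta>"
proof -
  have "\<omega> (M, Bot) = 0" for M
    using assms(3)[of M] matching_nonneg[OF assms(1), of "(M, Bot)"] by simp
  then have "marg2 \<omega> Bot = 0" unfolding marg2_def by simp
  then have "pad_bot \<Theta> Bot = 0" using assms(1) unfolding matching_def by simp
  moreover have "0 \<le> \<Theta> Bot" "mass \<Theta> \<le> 1" using assms(2) unfolding subdist_def by auto
  ultimately have "mass \<Theta> = 1" unfolding pad_bot_def by simp
  then have "pad_bot \<Theta> = \<Theta>" by (auto simp: pad_bot_def)
  with assms(1) show ?thesis by simp
qed

lemma weak_sim_quasimetric_nonneg:
  "weak_sim_quasimetric d \<Longrightarrow> M \<in> Nets \<Longrightarrow> N \<in> Nets \<Longrightarrow> 0 \<le> d M N"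
  unfolding weak_sim_quasimetric_def pseudoquasimetric_def by blast

lemma weak_sim_quasimetric_Bot_pos:
  assumes d: "weak_sim_quasimetric d" and M: "M \<in> Nets" "bot_free M"
  shows "0 < d M Bot"
proof -
  have "d M Bot \<noteq> 0"
  proof
    assume "d M Bot = 0"
    obtain m where "m \<notin> nds M" using ex_new_if_finite[OF infinite_UNIV_nat finite_nds] by blast
    then obtain \<Delta> where "trans M (LRcv m 0) \<Delta>" using bot_free_trans_LRcv M(2) by blast
    moreover have "is_action (LRcv m 0)" unfolding is_action_def by simp
    ultimately obtain \<Theta> where "weak (LRcv m 0) (dirac Bot) \<Theta>"
      using d M(1) Bot_in_Nets \<open>d M Bot = 0\<close> unfolding weak_sim_quasimetric_def by fastforce
    then show False by (auto dest: weak_from_dirac_Bot)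
  qed
  with weak_sim_quasimetric_nonneg[OF d M(1) Bot_in_Nets] show ?thesis by simp
qed

theorem proposition2p7:
  fixes d :: "net \<Rightarrow> net \<Rightarrow> real"
  assumes "weak_sim_quasimetric d"
  shows "weak_prob_sim {(M, N). M \<in> Nets \<and> N \<in> Nets \<and> d M N = 0}"
  unfolding weak_prob_sim_def
proof (intro conjI allI impI)
  fix M N a \<Delta>
  assume "(M, N) \<in> {(M, N). M \<in> Nets \<and> N \<in> Nets \<and> d M N = 0}" "is_action a" "trans M a \<Delta>"
  then have M: "M \<in> Nets" and N: "N \<in> Nets" and "d M N = 0" and tr: "trans M a \<Delta>" by auto
  with assms \<open>is_action a\<close> obtain \<Theta> where weak: "weak a (dirac N) \<Theta>"
    and K: "kantorovich d \<Delta> (pad_bot \<Theta>) \<le> 0"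
    unfolding weak_sim_quasimetric_def by fastforce
  have \<Theta>: "subdist \<Theta>" "supp (pad_bot \<Theta>) \<subseteq> Nets"
    using weak_dirac_subdist_Nets[OF weak N] supp_pad_bot Bot_in_Nets by blast+
  have \<Delta>: "is_dist \<Delta>" "supp \<Delta> \<subseteq> Nets" "\<forall>M'\<in>supp \<Delta>. bot_free M'"
    using trans_Nets_dist[OF tr M] trans_bot_free[OF tr] unfolding supp_def by auto
  obtain \<omega> where \<omega>: "matching \<omega> \<Delta> (pad_bot \<Theta>)" "matching_cost d \<omega> \<le> 0"
    using kantorovich_le_imp_matching[OF \<Delta>(1) is_dist_pad_bot[OF \<Theta>(1)] K] by blast
  have related: "M' \<in> supp \<Delta> \<and> N' \<in> supp (pad_bot \<Theta>) \<and> d M' N' = 0" if "0 < \<omega> (M', N')" for M' N'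
    using \<Delta>(2) \<Theta>(2) weak_sim_quasimetric_nonneg[OF assms]
    by (intro matching_cost_nonpos_imp_zero[OF \<omega> _ that]) blast
  have "\<not> 0 < \<omega> (M', Bot)" for M'
    using related[of M' Bot] weak_sim_quasimetric_Bot_pos[OF assms, of M'] \<Delta>(2,3) by auto
  with \<omega>(1) \<Theta>(1) have "matching \<omega> \<Delta> \<Theta>" by (rule matching_pad_bot_unused)
  with weak related \<Delta>(2) \<Theta>(2) show "\<exists>\<Theta> \<omega>. weak a (dirac N) \<Theta> \<and> matching \<omega> \<Delta> \<Theta>
      \<and> (\<forall>M' N'. 0 < \<omega> (M', N') \<longrightarrow> (M', N') \<in> {(M, N). M \<in> Nets \<and> N \<in> Nets \<and> d M N = 0})"
    by blast
qed auto

end
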